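(* Let $k\ge2$ and $n\in\mathbb{Z}$ with $\mathcal{F}_{n,k}(x)$ not identically zero. Then $$\mathcal{F}_{n,k}(x)=x^{r_{n,k}}\,(x^k+1)^{\rho_{n,k}}\,Q_{n,k}(x^k)$$ for a polynomial $Q_{n,k}(y)\in\mathbb{Z}[y]$ such that $Q_{n,k}(y)$ is not divisible by $y+1$ and $Q_{n,k}(0)\neq0$. Moreover, if $k$ is odd, then $x=-1$ is a root of $\mathcal{F}_{n,k}$ of multiplicity exactly $\rho_{n,k}$.
   Context: For $k\ge2$, the polynomials $\mathcal{F}_{n,k}(x)\in\mathbb{Z}[x]$ ($n\in\mathbb{Z}$) are defined by $\mathcal{F}_{1,k}=1$, $\mathcal{F}_{n,k}=0$ for $n=0,-1,\dots,-(k-2)$, and $\mathcal{F}_{n,k}(x)=\sum_{j=1}^{k}x^{k-j}\mathcal{F}_{n-j,k}(x)$ for all $n\in\mathbb{Z}$. This recurrence is used upwards for $n\ge2$, and downwards for $n\le-(k-1)$ as $\mathcal{F}_{n,k}=\mathcal{F}_{n+k,k}-\sum_{j=1}^{k-1}x^j\mathcal{F}_{n+j,k}$. The quantity $r_{n,k}\in\{0,\dots,k-1\}$ is defined as the residue of $(k-1)(n-1)$ modulo $k$ if $n>0$, and as the residue of $|n|+1$ modulo $k$ if $n\le0$. $\rho_{n,k}$ is defined as follows: let $a\in\{0,\dots,k\}$ be the residue of $n-2$ modulo $k+1$, and let $\rho_{n,k}\in\{0,\dots,k-1\}$ be the residue of $a$ modulo $k$. For $n\le0$ this equals $((k|n|-2)\bmod(k+1))\bmod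 k$. *)

theory Defs
  imports "HOL-Computational_Algebra.Polynomial"
begin

function Fpoly :: "nat \<Rightarrow> int \<Rightarrow> int poly" where
  "Fpoly k n =
    (if k < 2 then 0
     else if n = 1 then 1
     else if 2 - int k \<le> n \<and> n \<le> 0 then 0
     else if n \<ge> 2 then (\<Sum>j = 1..k. monom 1 (k - j) * Fpoly k (n - int j))
     else Fpoly k (n + int k) - (\<Sum>j = 1..k - 1. monom 1 j * Fpoly k (n + int j)))"
  by pat_completeness auto
termination
proof (relation "measure (\<lambda>(k, n). if 2 - int k \<le> n \<and> n \<le> 1 then 0
                                    else if n \<ge> 2 then nat n else nat (- n))")
  show "wf (measure (\<lambda>(k, n). if 2 - int k \<le> n \<and> n \<le> 1 then 0
                                    else if n \<ge> 2 then nat n else nat (- n)))" by simp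
qed auto

definition rr :: "nat \<Rightarrow> int \<Rightarrow> nat" where
  "rr k n = (if n > 0 then nat (((int k - 1) * (n - 1)) mod int k)
             else nat ((\<bar>n\<bar> + 1) mod int k))"

definition rho :: "nat \<Rightarrow> int \<Rightarrow> nat" where
  "rho k n = nat (((n - 2) mod (int k + 1)) mod int k)"

end

(*
  Substituting y = x^k linearises the problem: x^N F_{N+1}(x) = A_N(x^k) and
  x^((k-1)M) F_{-(M+k-1)}(x) = E_M(x^k) for polynomials A_N, E_M in Z[y] that obey
  recurrences of their own (A_N(y) counts the compositions of N into parts at most k,
  weighted by y^(number of parts)).  The power of x in the theorem is read off from the
  lowest nonzero coefficient of A_N resp. E_M.  The power of x^k + 1 is the multiplicity
  of the root y = -1 of A_N resp. E_M: a three-term recurrence involving the factor y + 1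
  determines it, together with the value at -1 of the cofactor, by induction along the
  residue of N (resp. M) modulo k + 1; these values are signed binomial coefficients.
  On the negative side the value can vanish, but then the multiplicities at 0 and -1
  together exceed the degree of E_M, so E_M = 0 and F = 0.  For odd k, -1 is a simple
  root of x^k + 1 and not a root of Q(x^k), which gives the multiplicity of -1 in F.
*)

theory Submission
  imports Defs
begin

lemma Fpoly_one: "k \<ge> 2 \<Longrightarrow> Fpoly k 1 = 1"
  by (subst Fpoly.simps) simp

lemma Fpoly_zero: "k \<ge> 2 \<Longrightarrow> 2 - int k \<le> n \<Longrightarrow> n \<le> 0 \<Longrightarrow> Fpoly k n = 0"
  by (subst Fpoly.simps) simp

lemma Fpoly_rec_up:
  "k \<ge> 2 \<Longrightarrow> n \<ge> 2 \<Longrightarrow> Fpoly k n = (\<Sum>j = 1..k. monom 1 (k - j) * Fpoly k (n - int j))"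
  by (subst Fpoly.simps) simp

lemma Fpoly_rec_down:
  "k \<ge> 2 \<Longrightarrow> n \<le> 1 - int k \<Longrightarrow>
   Fpoly k n = Fpoly k (n + int k) - (\<Sum>j = 1..k - 1. monom 1 j * Fpoly k (n + int j))"
  by (subst Fpoly.simps) simp

declare Fpoly.simps[simp del]

lemma Fpoly_one_minus_k: "k \<ge> 2 \<Longrightarrow> Fpoly k (1 - int k) = 1"
proof -
  assume k: "k \<ge> 2"
  then have "(\<Sum>j = 1..k - 1. monom 1 j * Fpoly k (1 - int k + int j)) = 0"
    by (intro sum.neutral ballI) (auto intro: Fpoly_zero)
  then show ?thesis using k by (simp add: Fpoly_rec_down Fpoly_one)
qed

lemma Fpoly_pos_shift:
  assumes "k \<ge> 2" "N \<ge> 1" "j \<in> {1..k}"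
  shows "Fpoly k (int N + 1 - int j) = (if j \<le> N then Fpoly k (int (N - j) + 1) else 0)"
proof (cases "j \<le> N")
  case True
  then have "int N + 1 - int j = int (N - j) + 1" by simp
  then show ?thesis using True by presburger
qed (use assms in \<open>auto intro: Fpoly_zero\<close>)

lemma Fpoly_neg_shift:
  assumes "k \<ge> 2" "M \<ge> 1" "j \<in> {1..k}"
  shows "Fpoly k (- (int M + int k - 1) + int j) =
    (if j \<le> M then Fpoly k (- (int (M - j) + int k - 1)) else 0)"
proof (cases "j \<le> M")
  case True
  then have "- (int M + int k - 1) + int j = - (int (M - j) + int k - 1)" by simp
  then show ?thesis using True by presburger
qed (use assms in \<open>auto intro: Fpoly_zero\<close>)

lemma pcompose_monom_1: "pcompose (monom 1 m) q = q ^ m"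
  by (induction m) (auto simp: monom_Suc pcompose_pCons pcompose_1)

lemma pcompose_power: "pcompose (p ^ n) q = pcompose p q ^ n"
  by (induction n) (simp_all add: pcompose_mult pcompose_1)

lemma monom_1_mult_monom_1: "monom (1::'a::comm_semiring_1) a * monom 1 b = monom 1 (a + b)"
  by (simp add: mult_monom)

lemma coeff_monom_mult_add: "coeff (monom c n * p) (n + i) = c * coeff p i"
  by (simp add: coeff_monom_mult)

lemma order_add_order_le_degree:
  fixes P :: "'a::idom poly"
  assumes "P \<noteq> 0" "a \<noteq> b"
  shows "order a P + order b P \<le> degree P"
proof -
  obtain P1 where P1: "P = [:-a, 1:] ^ order a P * P1"
    using order_decomp[OF assms(1)] by blast
  have P1n: "P1 \<noteq> 0" using P1 assms by auto
  have "order b ([:-a, 1:] ^ order a P) = 0"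
    using assms(2) by (intro order_0I) simp
  then have "order b P = order b P1"
    using P1 assms order_mult[of "[:-a, 1:] ^ order a P" P1 b] by simp
  also have "\<dots> \<le> degree P1" using order_degree[OF P1n] .
  finally show ?thesis
    using P1 P1n assms(1) by (metis add_le_cancel_left degree_mult_eq degree_linear_power mult_eq_0_iff)
qed

lemma order_minus_one_monom_plus_1:
  assumes "odd k"
  shows "order (-1) (monom (1::'a::{idom,ring_char_0}) k + 1) = 1"
proof -
  have k: "k \<ge> 1" using assms by (cases k) auto
  have "coeff (monom (1::'a) k + 1) k = 1" using k by simp
  then have ne: "monom (1::'a) k + 1 \<noteq> 0" by (metis coeff_0 zero_neq_one)
  have root: "poly (monom (1::'a) k + 1) (-1) = 0" using assms by (simp add: poly_monom)
  have "poly (pderiv (monom (1::'a) k + 1)) (-1) \<noteq> 0"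
    using k by (simp add: pderiv_monom pderiv_add poly_monom)
  then show ?thesis using order_pderiv[OF ne root] order_0I by simp
qed

lemma sum_sliding_window:
  fixes f :: "int \<Rightarrow> 'a::comm_monoid_add"
  shows "(\<Sum>p = 1..k. f (m - int p)) + f (m - 1 - int k) = (\<Sum>p = 1..k. f (m - 1 - int p)) + f (m - 1)"
proof (induction k)
  case (Suc k)
  then show ?case by (simp add: add_ac algebra_simps)
qed simp

lemma sum_power_shift:
  fixes g :: "nat \<Rightarrow> 'a::comm_ring_1"
  shows "(\<Sum>p<k. c ^ p * g p) = g 0 - c ^ k * g k + c * (\<Sum>p<k. c ^ p * g (Suc p))"
  by (induction k) (simp_all add: algebra_simps)

lemma quotient_bounds:
  fixes N q j d :: int
  assumes "N \<ge> 2" "N = q * d + j" "0 \<le> j" "j < d"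
  shows "q \<ge> 0" "j \<le> 1 \<Longrightarrow> q \<ge> 1"
proof -
  have "(-1) * d < q * d" "j \<le> 1 \<Longrightarrow> 0 * d < q * d" using assms by simp_all
  then show "q \<ge> 0" "j \<le> 1 \<Longrightarrow> q \<ge> 1"
    using mult_right_less_imp_less[of _ d q] assms by fastforce+
qed

subsection \<open>Multiplicity and cofactor value at -1\<close>

definition lead_at_minus_one :: "nat \<Rightarrow> 'a \<Rightarrow> 'a::comm_ring_1 poly \<Rightarrow> bool" where
  "lead_at_minus_one r c P \<longleftrightarrow> (\<exists>B. P = [:1, 1:] ^ r * B \<and> poly B (-1) = c)"

lemma lead_at_minus_one_zero: "lead_at_minus_one r 0 0"
  by (auto simp: lead_at_minus_one_def intro: exI[of _ 0])

lemma lead_at_minus_one_poly: "lead_at_minus_one 0 (poly P (-1)) P"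
  by (auto simp: lead_at_minus_one_def)

lemma lead_at_minus_one_linear: "lead_at_minus_one 1 1 [:1, 1:]"
  by (auto simp: lead_at_minus_one_def one_pCons intro!: exI[of _ 1])

lemma lead_at_minus_one_monom: "lead_at_minus_one 0 ((-1) ^ p) (monom 1 p)"
  using lead_at_minus_one_poly[of "monom 1 p"] by (simp add: poly_monom)

lemma lead_at_minus_one_mult:
  "lead_at_minus_one r a P \<Longrightarrow> lead_at_minus_one s b Q \<Longrightarrow> lead_at_minus_one (r + s) (a * b) (P * Q)"
  unfolding lead_at_minus_one_def
  by (elim exE conjE, rule exI[of _ "_ * _"]) (auto simp: power_add ac_simps)

lemma lead_at_minus_one_diff:
  "lead_at_minus_one r a P \<Longrightarrow> lead_at_minus_one r b Q \<Longrightarrow> lead_at_minus_one r (a - b) (P - Q)"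
  unfolding lead_at_minus_one_def
  by (elim exE conjE, rule exI[of _ "_ - _"]) (auto simp: right_diff_distrib)

lemma lead_at_minus_one_less:
  assumes "lead_at_minus_one r c P" "s < r"
  shows "lead_at_minus_one s 0 P"
proof -
  obtain B where B: "P = [:1, 1:] ^ r * B" using assms(1) by (auto simp: lead_at_minus_one_def)
  have "P = [:1, 1:] ^ s * ([:1, 1:] ^ (r - s) * B)"
    using assms(2) by (simp add: B mult.assoc[symmetric] power_add[symmetric])
  moreover have "poly ([:1, 1:] ^ (r - s) * B) (-1) = 0" using assms(2) by (simp add: power_0_left)
  ultimately show ?thesis unfolding lead_at_minus_one_def by blast
qed

lemma lead_at_minus_one_power:
  "lead_at_minus_one r c P \<Longrightarrow> lead_at_minus_one (n * r) (c ^ n) (P ^ n)"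
  by (induction n) (use lead_at_minus_one_poly[of 1] in \<open>auto dest: lead_at_minus_one_mult\<close>)

lemma lead_at_minus_one_order:
  fixes P :: "'a::idom poly"
  assumes "lead_at_minus_one r c P" "c \<noteq> 0"
  shows "P \<noteq> 0" "order (-1) P = r"
proof -
  obtain B where B: "P = [:1, 1:] ^ r * B" "poly B (-1) = c"
    using assms(1) by (auto simp: lead_at_minus_one_def)
  then show "P \<noteq> 0" using assms(2) by auto
  then show "order (-1) P = r"
    using B assms(2) order_mult[of "[:1, 1:] ^ r" B "-1"] order_power_n_n[of "-1::'a" r] order_0I
    by fastforce
qed

lemma lead_at_minus_one_exists:
  fixes P :: "'a::idom poly"
  assumes "P \<noteq> 0"
  shows "\<exists>c. c \<noteq> 0 \<and> lead_at_minus_one (order (-1) P) c P"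
proof -
  obtain B where "P = [:1, 1:] ^ order (-1) P * B" "\<not> [:1, 1:] dvd B"
    using order_decomp[OF assms, of "-1"] by auto
  then show ?thesis unfolding lead_at_minus_one_def by (auto simp: dvd_iff_poly_eq_0)
qed

lemma lead_at_minus_one_zero_order:
  fixes P :: "'a::idom poly"
  assumes "lead_at_minus_one r 0 P" "P \<noteq> 0"
  shows "r < order (-1) P"
proof -
  obtain B where B: "P = [:1, 1:] ^ r * B" "poly B (-1) = 0"
    using assms(1) by (auto simp: lead_at_minus_one_def)
  then have "[:1, 1:] dvd B" by (simp add: dvd_iff_poly_eq_0)
  then have "[:1, 1:] ^ r * [:1, 1:] dvd P" unfolding B(1) by (rule mult_dvd_mono[OF dvd_refl])
  then have "[:- (-1), 1:] ^ Suc r dvd P" by (simp only: power_Suc2 minus_minus)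
  then show ?thesis using order_divides[of "-1" "Suc r" P] assms(2) by auto
qed

definition xk_factorization :: "nat \<Rightarrow> nat \<Rightarrow> nat \<Rightarrow> 'a::comm_ring_1 poly \<Rightarrow> bool" where
  "xk_factorization k r \<rho> F \<longleftrightarrow> (\<exists>Q. F = monom 1 r * (monom 1 k + 1) ^ \<rho> * pcompose Q (monom 1 k)
     \<and> \<not> [:1, 1:] dvd Q \<and> poly Q 0 \<noteq> 0)"

lemma xk_factorizationI:
  fixes F P :: "'a::idom poly"
  assumes link: "monom 1 a * F = pcompose P (monom 1 k)" and "k * m = a + r"
    and vanish: "\<forall>i<m. coeff P i = 0" and lowest: "coeff P m \<noteq> 0"
    and lead: "lead_at_minus_one \<rho> c P" "c \<noteq> 0"
  shows "xk_factorization k r \<rho> F"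
proof -
  have "monom 1 m dvd P" using vanish by (simp add: monom_1_dvd_iff')
  then obtain G where G: "P = monom 1 m * G" by (elim dvdE)
  have "P \<noteq> 0" using lowest by auto
  then have "G \<noteq> 0" using G by auto
  have "order (-1) (monom (1::'a) m) = 0" by (rule order_0I) (simp add: poly_monom)
  then have "order (-1) G = \<rho>"
    using G order_mult[of "monom 1 m" G "-1"] lead_at_minus_one_order[OF lead] by simp
  then obtain Q where GQ: "G = [:1, 1:] ^ \<rho> * Q" "\<not> [:1, 1:] dvd Q"
    using order_decomp[OF \<open>G \<noteq> 0\<close>, of "-1"] by auto
  have "coeff P m = poly G 0" using G by (simp add: coeff_monom_mult poly_0_coeff_0)
  then have Q0: "poly Q 0 = coeff P m" using GQ(1) by simp
  have "pcompose [:1, 1:] (monom 1 k) = monom (1::'a) k + 1"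
    by (simp add: pcompose_pCons one_pCons)
  then have "monom 1 a * F = monom 1 (k * m) * (monom 1 k + 1) ^ \<rho> * pcompose Q (monom 1 k)"
    using link G GQ by (simp add: pcompose_mult pcompose_power pcompose_monom_1 monom_power mult.assoc)
  also have "\<dots> = monom 1 a * (monom 1 r * (monom 1 k + 1) ^ \<rho> * pcompose Q (monom 1 k))"
    using \<open>k * m = a + r\<close> by (simp add: monom_1_mult_monom_1[symmetric] mult.assoc)
  finally show ?thesis using GQ(2) Q0 lowest unfolding xk_factorization_def by auto
qed

lemma xk_factorization_order_minus_one:
  fixes F :: "'a::{idom,ring_char_0} poly"
  assumes "odd k" "xk_factorization k r \<rho> F"
  shows "order (-1) F = \<rho>"
proof -
  obtain Q where F: "F = monom 1 r * (monom 1 k + 1) ^ \<rho> * pcompose Q (monom 1 k)" "\<not> [:1, 1:] dvd Q"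
    using assms(2) unfolding xk_factorization_def by blast
  have "coeff (monom (1::'a) k + 1) k = 1" using odd_pos[OF assms(1)] by simp
  then have "monom (1::'a) k + 1 \<noteq> 0" by (metis coeff_0 zero_neq_one)
  from lead_at_minus_one_exists[OF this] obtain c where "c \<noteq> 0" "lead_at_minus_one 1 c (monom (1::'a) k + 1)"
    unfolding order_minus_one_monom_plus_1[OF assms(1)] by blast
  moreover have "lead_at_minus_one 0 (poly Q (-1)) (pcompose Q (monom 1 k))"
    using lead_at_minus_one_poly[of "pcompose Q (monom 1 k)"] assms(1) by (simp add: poly_pcompose poly_monom)
  ultimately have "lead_at_minus_one (0 + \<rho> * 1 + 0) ((-1) ^ r * c ^ \<rho> * poly Q (-1)) F"
    unfolding F(1) by (intro lead_at_minus_one_mult lead_at_minus_one_monom lead_at_minus_one_power)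
  moreover have "poly Q (-1) \<noteq> 0" using F(2) by (simp add: dvd_iff_poly_eq_0)
  ultimately show ?thesis using \<open>c \<noteq> 0\<close> lead_at_minus_one_order(2) by fastforce
qed

subsection \<open>Positive indices\<close>

text \<open>\<open>Apoly k N\<close> is the polynomial with \<open>x^N F_{N+1}(x) = Apoly k N (x^k)\<close>.\<close>

function Apoly :: "nat \<Rightarrow> int \<Rightarrow> int poly" where
  "Apoly k m = (if m < 0 then 0 else if m = 0 then 1
                else monom 1 1 * (\<Sum>p = 1..k. Apoly k (m - int p)))"
  by pat_completeness auto
termination
  by (relation "measure (\<lambda>(k, m). nat (m + 1))") auto

lemma Apoly_neg: "m < 0 \<Longrightarrow> Apoly k m = 0"
  by simp

lemma Apoly_0 [simp]: "Apoly k 0 = 1"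
  by simp

lemma Apoly_pos: "m > 0 \<Longrightarrow> Apoly k m = monom 1 1 * (\<Sum>p = 1..k. Apoly k (m - int p))"
  by (subst Apoly.simps) simp

declare Apoly.simps[simp del]

lemma Apoly_1: "k \<ge> 1 \<Longrightarrow> Apoly k 1 = monom 1 1"
proof -
  assume "k \<ge> 1"
  then have "{1..k} = insert 1 {2..k}" by auto
  then show ?thesis by (simp add: Apoly_pos Apoly_neg)
qed

lemma Fpoly_pos_eq_Apoly:
  assumes k: "k \<ge> 2"
  shows "monom 1 N * Fpoly k (int N + 1) = pcompose (Apoly k (int N)) (monom 1 k)"
proof (induction N rule: less_induct)
  case (less N)
  show ?case
  proof (cases "N = 0")
    case True
    then show ?thesis using k by (simp add: Fpoly_one pcompose_1)
  next
    case False
    have summand: "monom 1 N * (monom 1 (k - j) * Fpoly k (int N + 1 - int j)) =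
        monom 1 k * pcompose (Apoly k (int N - int j)) (monom 1 k)" if j: "j \<in> {1..k}" for j
    proof (cases "j \<le> N")
      case True
      have "N + (k - j) = k + (N - j)" using True j by simp
      then have "monom 1 N * (monom 1 (k - j) * Fpoly k (int N + 1 - int j)) =
          monom 1 k * (monom 1 (N - j) * Fpoly k (int (N - j) + 1))"
        using Fpoly_pos_shift[OF k _ j] True False
        by (simp add: monom_1_mult_monom_1 mult.assoc[symmetric])
      also have "\<dots> = monom 1 k * pcompose (Apoly k (int (N - j))) (monom 1 k)"
        using less[of "N - j"] True j False by simp
      finally show ?thesis using True by (simp add: of_nat_diff)
    next
      case False
      then show ?thesis using Fpoly_pos_shift[OF k _ j] \<open>N \<noteq> 0\<close> by (simp add: Apoly_neg)
    qed
    have "monom 1 N * Fpoly k (int N + 1) =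
        (\<Sum>j = 1..k. monom 1 N * (monom 1 (k - j) * Fpoly k (int N + 1 - int j)))"
      using k False by (simp add: Fpoly_rec_up sum_distrib_left)
    also have "\<dots> = (\<Sum>j = 1..k. monom 1 k * pcompose (Apoly k (int N - int j)) (monom 1 k))"
      using summand by (rule sum.cong[OF refl])
    also have "\<dots> = pcompose (Apoly k (int N)) (monom 1 k)"
      using False by (simp add: Apoly_pos pcompose_mult pcompose_monom_1 pcompose_sum sum_distrib_left)
    finally show ?thesis .
  qed
qed

lemma Apoly_rec:
  assumes "m \<ge> 2"
  shows "Apoly k m = [:1, 1:] * Apoly k (m - 1) - monom 1 1 * Apoly k (m - 1 - int k)"
proof -
  have "Apoly k m + monom 1 1 * Apoly k (m - 1 - int k) = Apoly k (m - 1) + monom 1 1 * Apoly k (m - 1)"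
    using assms arg_cong[OF sum_sliding_window[of "Apoly k"], of "\<lambda>x. monom 1 1 * x"]
    by (simp add: Apoly_pos algebra_simps)
  moreover have "[:1, 1:] = 1 + (monom 1 1 :: int poly)" by (simp add: monom_Suc one_pCons)
  ultimately show ?thesis by (simp add: algebra_simps)
qed

lemma coeff_Apoly_eq_0: "k * m < N \<Longrightarrow> coeff (Apoly k (int N)) m = 0"
proof (induction N arbitrary: m rule: less_induct)
  case (less N)
  have "coeff (Apoly k (int N - int p)) (m - 1) = 0" if "p \<in> {1..k}" "m > 0" for p
  proof (cases "p \<le> N")
    case True
    have "k * (m - 1) + k = k * m" using that(2) by (cases m) auto
    moreover have "p \<le> k" using that(1) by simp
    ultimately have "k * (m - 1) < N - p" using less.prems True by linarith
    then show ?thesis using less.IH[of "N - p"] True that by (simp add: of_nat_diff)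
  qed (simp add: Apoly_neg)
  then show ?case using less.prems by (simp add: Apoly_pos coeff_monom_mult coeff_sum)
qed

lemma coeff_Apoly_nonneg: "coeff (Apoly k m) i \<ge> 0"
proof (induction m arbitrary: i rule: Apoly.induct)
  case (1 k m)
  consider "m < 0" | "m = 0" | "m > 0" by linarith
  then show ?case
    by cases (use 1 in \<open>auto simp: Apoly_pos Apoly_neg coeff_monom_mult coeff_sum intro!: sum_nonneg\<close>)
qed

lemma coeff_Apoly_pos: "k \<ge> 1 \<Longrightarrow> N \<le> k * m \<Longrightarrow> k * m < N + k \<Longrightarrow> coeff (Apoly k (int N)) m > 0"
proof (induction N arbitrary: m rule: less_induct)
  case (less N)
  show ?case
  proof (cases "N = 0")
    case True
    then have "m = 0" using less.prems by (cases m) auto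
    then show ?thesis using True by simp
  next
    case False
    then obtain m' where m': "m = Suc m'" using less.prems by (cases m) auto
    define p where "p = min k N"
    have p: "p \<in> {1..k}" "p \<le> N" using False less.prems by (auto simp: p_def)
    have "k \<le> N" if "m' > 0"
    proof -
      have "k \<le> k * m'" "k * m = k + k * m'" using that m' by simp_all
      then show ?thesis using less.prems(3) by linarith
    qed
    then have "N - p \<le> k * m' \<and> k * m' < N - p + k"
      using less.prems unfolding m' p_def by (cases "m' = 0") (auto simp: min_def)
    then have "coeff (Apoly k (int N - int p)) m' > 0"
      using less.IH[of "N - p"] p less.prems by (simp add: of_nat_diff)
    then have "(\<Sum>p = 1..k. coeff (Apoly k (int N - int p)) m') > 0"
      by (intro sum_pos2[OF _ p(1)]) (auto simp: coeff_Apoly_nonneg)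
    then show ?thesis using False m' by (simp add: Apoly_pos coeff_monom_mult coeff_sum)
  qed
qed

text \<open>The quotient \<open>q\<close> ranges over the integers so that the indices \<open>1 - k \<le> N < 0\<close>, where
  \<open>q = -1\<close>, are covered as well; there the value is \<open>0\<close>, matching the vanishing polynomial.\<close>

definition A_lead :: "int \<Rightarrow> int \<Rightarrow> int" where
  "A_lead q j = (if j = 0 then 1 else - int (nat (q + j - 1) choose (nat j - 1)))"

lemma A_lead_rec:
  assumes "q \<ge> 0" "j \<le> 1 \<Longrightarrow> q \<ge> 1"
  shows "A_lead q j = (if j \<ge> 2 then A_lead q (j - 1) else 0) + A_lead (q - 1) j"
proof (cases "j \<ge> 2")
  case True
  then have "nat (q + j - 1) = Suc (nat (q + j - 2))" "nat (q + (j - 1) - 1) = nat (q + j - 2)"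
    "nat (q - 1 + j - 1) = nat (q + j - 2)" "nat (j - 1) - 1 = nat j - 2" "nat j - 1 = Suc (nat j - 2)"
    using assms by linarith+
  then show ?thesis using True by (simp add: A_lead_def)
qed (use assms in \<open>auto simp: A_lead_def\<close>)

lemma Apoly_lead_at_minus_one_initial:
  assumes k: "k \<ge> 2" and N: "1 - int k \<le> N" "N \<le> 1" "N = q * (int k + 1) + j" "0 \<le> j" "j \<le> int k"
  shows "lead_at_minus_one (nat j - 1) (A_lead q j) (Apoly k N)"
proof -
  consider "N < 0" | "N = 0" | "N = 1" using N by linarith
  then show ?thesis
  proof cases
    case 1
    have "N = (int k + 1) * (-1) + (N + int k + 1)" by simp
    from int_div_pos_eq[OF this] have "q = -1"
      using int_div_pos_eq[of N "int k + 1" q j] N 1 by (simp add: mult.commute)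
    then have "A_lead q j = 0" using N 1 by (simp add: A_lead_def)
    then show ?thesis using 1 by (simp add: Apoly_neg lead_at_minus_one_zero)
  next
    case 2
    then have "q = 0" "j = 0" using int_div_pos_eq[of N "int k + 1" q j] N by (simp_all add: mult.commute)
    then show ?thesis using 2 lead_at_minus_one_poly[of 1] by (simp add: A_lead_def)
  next
    case 3
    then have "q = 0" "j = 1" using int_div_pos_eq[of N "int k + 1" q j] N k by (simp_all add: mult.commute)
    then show ?thesis using 3 k lead_at_minus_one_poly[of "monom 1 1"] by (simp add: A_lead_def Apoly_1 poly_monom)
  qed
qed

lemma linear_mult_Apoly_lead_at_minus_one:
  assumes k: "k \<ge> 2" and N: "N = q * (int k + 1) + j" "0 \<le> j" "j \<le> int k" "q \<ge> 0" "j \<le> 1 \<Longrightarrow> q \<ge> 1"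
    and IH: "\<And>q' j'. N - 1 = q' * (int k + 1) + j' \<Longrightarrow> 0 \<le> j' \<Longrightarrow> j' \<le> int k \<Longrightarrow>
      lead_at_minus_one (nat j' - 1) (A_lead q' j') (Apoly k (N - 1))"
  shows "lead_at_minus_one (nat j - 1) (if j \<ge> 2 then A_lead q (j - 1) else 0) ([:1, 1:] * Apoly k (N - 1))"
proof -
  consider "j = 0" | "j = 1" | "j \<ge> 2" using N by linarith
  then show ?thesis
  proof cases
    case 1
    then have "lead_at_minus_one (k - 1) (A_lead (q - 1) (int k)) (Apoly k (N - 1))"
      using IH[of "q - 1" "int k"] N k by (simp add: algebra_simps)
    then show ?thesis using 1 k lead_at_minus_one_mult[OF lead_at_minus_one_linear]
      by (auto intro: lead_at_minus_one_less)
  next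
    case 2
    then have "lead_at_minus_one 0 1 (Apoly k (N - 1))"
      using IH[of q 0] N by (simp add: algebra_simps A_lead_def)
    then show ?thesis using 2 lead_at_minus_one_mult[OF lead_at_minus_one_linear]
      by (auto intro: lead_at_minus_one_less)
  next
    case 3
    then have "lead_at_minus_one (nat j - 2) (A_lead q (j - 1)) (Apoly k (N - 1))"
      using IH[of q "j - 1"] N by (simp add: algebra_simps nat_diff_distrib' numeral_2_eq_2)
    moreover have "1 + (nat j - 2) = nat j - 1" using 3 by linarith
    ultimately show ?thesis using 3 lead_at_minus_one_mult[OF lead_at_minus_one_linear] by fastforce
  qed
qed

lemma Apoly_lead_at_minus_one:
  assumes k: "k \<ge> 2"
  shows "1 - int k \<le> N \<Longrightarrow> N = q * (int k + 1) + j \<Longrightarrow> 0 \<le> j \<Longrightarrow> j \<le> int k \<Longrightarrow>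
    lead_at_minus_one (nat j - 1) (A_lead q j) (Apoly k N)"
proof (induction "nat (N + int k)" arbitrary: N q j rule: less_induct)
  case less
  note N = less.prems
  have IH: "lead_at_minus_one (nat j' - 1) (A_lead q' j') (Apoly k N')"
    if "N' < N" "1 - int k \<le> N'" "N' = q' * (int k + 1) + j'" "0 \<le> j'" "j' \<le> int k" for N' q' j'
    using less.hyps[of N' q' j'] that by simp
  show ?case
  proof (cases "N \<le> 1")
    case True
    then show ?thesis using Apoly_lead_at_minus_one_initial[OF k] N by blast
  next
    case False
    then have N2: "N \<ge> 2" by simp
    have q: "q \<ge> 0" "j \<le> 1 \<Longrightarrow> q \<ge> 1" using quotient_bounds[OF N2 N(2,3)] N(4) by simp_all
    have "lead_at_minus_one (nat j - 1) (if j \<ge> 2 then A_lead q (j - 1) else 0) ([:1, 1:] * Apoly k (N - 1))"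
      by (rule linear_mult_Apoly_lead_at_minus_one[OF k N(2-4) q]) (use IH N2 k in auto)
    moreover have "lead_at_minus_one (nat j - 1) ((-1) ^ 1 * A_lead (q - 1) j) (monom 1 1 * Apoly k (N - 1 - int k))"
      using lead_at_minus_one_mult[OF lead_at_minus_one_monom[of 1] IH[of "N - 1 - int k" "q - 1" j]] N q N2
      by (simp add: algebra_simps)
    ultimately show ?thesis
      using lead_at_minus_one_diff A_lead_rec[OF q] by (fastforce simp: Apoly_rec[OF N2])
  qed
qed

lemma rr_pos:
  assumes k: "k \<ge> 2"
  shows "rr k (int N + 1) < k" "k dvd N + rr k (int N + 1)"
proof -
  define t where "t = ((int k - 1) * int N) mod int k"
  have t: "0 \<le> t" "t < int k" and r: "rr k (int N + 1) = nat t" using k by (simp_all add: t_def rr_def)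
  have "(int N + t) mod int k = (int k * int N) mod int k"
    unfolding t_def by (simp add: mod_add_right_eq algebra_simps)
  then have "int k dvd int (N + nat t)" using t by (simp add: mod_eq_0_iff_dvd)
  then show "rr k (int N + 1) < k" "k dvd N + rr k (int N + 1)" using r t by (simp_all only: of_nat_dvd_iff)
qed

lemma rho_pos:
  assumes k: "k \<ge> 2"
  shows "rho k (int N + 1) = nat (int N mod (int k + 1)) - 1"
proof -
  define q j where "q = int N div (int k + 1)" and "j = int N mod (int k + 1)"
  have j: "0 \<le> j" "j < int k + 1" and N: "int N = (int k + 1) * q + j"
    unfolding q_def j_def using pos_mod_bound[of "int k + 1"] by simp_all
  show ?thesis
  proof (cases "j = 0")
    case True
    have "int N + 1 - 2 = (int k + 1) * (q - 1) + int k" using N True by (simp add: algebra_simps)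
    then have "(int N + 1 - 2) mod (int k + 1) = int k" by (rule int_mod_pos_eq) auto
    then show ?thesis using True by (simp add: rho_def j_def)
  next
    case False
    have "int N + 1 - 2 = (int k + 1) * q + (j - 1)" using N by simp
    then have "(int N + 1 - 2) mod (int k + 1) = j - 1" by (rule int_mod_pos_eq) (use j False in auto)
    then show ?thesis using j False unfolding rho_def j_def[symmetric] by (simp add: nat_diff_distrib)
  qed
qed

lemma Fpoly_pos_xk_factorization:
  assumes k: "k \<ge> 2"
  shows "xk_factorization k (rr k (int N + 1)) (rho k (int N + 1)) (Fpoly k (int N + 1))"
proof -
  define r where "r = rr k (int N + 1)"
  obtain m where m: "N + r = k * m" and "r < k" using rr_pos[OF k, of N] unfolding r_def by (auto elim: dvdE)
  define q j where "q = int N div (int k + 1)" and "j = int N mod (int k + 1)"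
  have j: "0 \<le> j" "j \<le> int k" and q: "q \<ge> 0" and N: "int N = q * (int k + 1) + j"
    unfolding q_def j_def using pos_mod_bound[of "int k + 1"]
    by (simp_all add: pos_imp_zdiv_nonneg_iff div_mult_mod_eq)
  have "nat j - 1 = nat (j - 1)" using j by (simp add: nat_diff_distrib')
  then have "nat j - 1 \<le> nat (q + j - 1)" using q by simp
  then have "A_lead q j \<noteq> 0" by (simp add: A_lead_def)
  moreover have "lead_at_minus_one (nat j - 1) (A_lead q j) (Apoly k (int N))"
    using Apoly_lead_at_minus_one[OF k _ N j] k by simp
  moreover have "\<forall>i<m. coeff (Apoly k (int N)) i = 0"
  proof (intro allI impI coeff_Apoly_eq_0)
    fix i assume "i < m"
    then have "k * i + k \<le> k * m" by (metis add.commute mult_Suc_right mult_le_mono2 Suc_leI)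
    then show "k * i < N" using m \<open>r < k\<close> by linarith
  qed
  moreover have "coeff (Apoly k (int N)) m \<noteq> 0" using coeff_Apoly_pos[of k N m] k m \<open>r < k\<close> by simp
  ultimately have "xk_factorization k r (nat j - 1) (Fpoly k (int N + 1))"
    using xk_factorizationI[OF Fpoly_pos_eq_Apoly[OF k] m[symmetric]] by blast
  then show ?thesis using rho_pos[OF k] by (simp add: r_def j_def)
qed

subsection \<open>Negative indices\<close>

text \<open>\<open>Epoly k M\<close> is the polynomial with \<open>x^((k-1)M) F_{-(M+k-1)}(x) = Epoly k M (x^k)\<close>.\<close>

function Epoly :: "nat \<Rightarrow> int \<Rightarrow> int poly" where
  "Epoly k m = (if k = 0 \<or> m < 0 then 0 else if m = 0 then 1
                else monom 1 (k - 1) * Epoly k (m - int k) - (\<Sum>p = 1..k - 1. monom 1 p * Epoly k (m - int p)))"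
  by pat_completeness auto
termination
  by (relation "measure (\<lambda>(k, m). nat (m + 1))") auto

lemma Epoly_neg: "m < 0 \<Longrightarrow> Epoly k m = 0"
  by simp

lemma Epoly_0 [simp]: "k > 0 \<Longrightarrow> Epoly k 0 = 1"
  by simp

lemma Epoly_pos:
  "k > 0 \<Longrightarrow> m > 0 \<Longrightarrow>
    Epoly k m = monom 1 (k - 1) * Epoly k (m - int k) - (\<Sum>p = 1..k - 1. monom 1 p * Epoly k (m - int p))"
  by (subst Epoly.simps) simp

declare Epoly.simps[simp del]

lemma Epoly_1: "k \<ge> 2 \<Longrightarrow> Epoly k 1 = - monom 1 1"
proof -
  assume k: "k \<ge> 2"
  then have "{1..k - 1} = insert 1 {2..k - 1}" by auto
  then show ?thesis using k by (simp add: Epoly_pos Epoly_neg)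
qed

lemma Fpoly_neg_eq_Epoly:
  assumes k: "k \<ge> 2"
  shows "monom 1 ((k - 1) * M) * Fpoly k (- (int M + int k - 1)) = pcompose (Epoly k (int M)) (monom 1 k)"
proof (induction M rule: less_induct)
  case (less M)
  show ?case
  proof (cases "M = 0")
    case True
    then show ?thesis using k by (simp add: Fpoly_one_minus_k pcompose_1)
  next
    case False
    have summand: "monom 1 ((k - 1) * M) * Fpoly k (- (int M + int k - 1) + int j) =
        monom 1 (k * j - j) * pcompose (Epoly k (int M - int j)) (monom 1 k)" if j: "j \<in> {1..k}" for j
    proof (cases "j \<le> M")
      case True
      have "(k - 1) * M = (k - 1) * j + (k - 1) * (M - j)"
        using True by (simp flip: add_mult_distrib2)
      then have "(k - 1) * M = (k * j - j) + (k - 1) * (M - j)" by (simp add: diff_mult_distrib)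
      then have "monom 1 ((k - 1) * M) * Fpoly k (- (int M + int k - 1) + int j) =
          monom 1 (k * j - j) * (monom 1 ((k - 1) * (M - j)) * Fpoly k (- (int (M - j) + int k - 1)))"
        using Fpoly_neg_shift[OF k _ j] True False by (simp add: monom_1_mult_monom_1 mult.assoc)
      also have "\<dots> = monom 1 (k * j - j) * pcompose (Epoly k (int (M - j))) (monom 1 k)"
        using less[of "M - j"] True j False by simp
      finally show ?thesis using True by (simp add: of_nat_diff)
    next
      case False
      then show ?thesis using Fpoly_neg_shift[OF k _ j] \<open>M \<noteq> 0\<close> by (simp add: Epoly_neg)
    qed
    have xk_power: "monom 1 j * monom 1 (k * j - j) = (monom 1 k :: int poly) ^ j" for j
      using k by (simp add: monom_power monom_1_mult_monom_1)
    have "monom 1 ((k - 1) * M) * Fpoly k (- (int M + int k - 1)) =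
        monom 1 ((k - 1) * M) * Fpoly k (- (int M + int k - 1) + int k) -
        (\<Sum>j = 1..k - 1. monom 1 j * (monom 1 ((k - 1) * M) * Fpoly k (- (int M + int k - 1) + int j)))"
      using k by (simp add: Fpoly_rec_down right_diff_distrib sum_distrib_left mult.left_commute)
    also have "\<dots> = monom 1 (k * k - k) * pcompose (Epoly k (int M - int k)) (monom 1 k) -
        (\<Sum>j = 1..k - 1. monom 1 j * (monom 1 (k * j - j) * pcompose (Epoly k (int M - int j)) (monom 1 k)))"
      using k by (intro arg_cong2[where f = minus] sum.cong arg_cong[where f = "times _"] summand refl) auto
    also have "\<dots> = pcompose (Epoly k (int M)) (monom 1 k)"
      using False k monom_power[of "1::int" k "k - 1"]
      by (simp add: Epoly_pos pcompose_mult pcompose_diff pcompose_monom_1 pcompose_sum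
          mult.assoc[symmetric] xk_power diff_mult_distrib2)
    finally show ?thesis .
  qed
qed

lemma Epoly_rec:
  assumes k: "k \<ge> 2" and m: "m \<ge> 2"
  shows "Epoly k m = monom 1 (k - 1) * [:1, 1:] * Epoly k (m - int k) - monom 1 k * Epoly k (m - 1 - int k)"
proof -
  define y :: "int poly" where "y = monom 1 1"
  have y_power: "monom 1 p = y ^ p" for p by (simp add: y_def monom_power)
  have window: "(\<Sum>p<k. y ^ p * Epoly k (m' - int p)) = y ^ (k - 1) * Epoly k (m' - int k)" if "m' > 0" for m'
  proof -
    have "{..<k} = insert 0 {1..k - 1}" using k by auto
    then show ?thesis using that k by (simp add: Epoly_pos y_power)
  qed
  have "y * (\<Sum>p<k. y ^ p * Epoly k (m - 1 - int p)) = y ^ k * Epoly k (m - 1 - int k)"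
    using window[of "m - 1"] m k by (simp add: mult.assoc[symmetric] flip: power_Suc)
  then have "Epoly k m = y ^ (k - 1) * Epoly k (m - int k) + y ^ k * Epoly k (m - int k) - y ^ k * Epoly k (m - 1 - int k)"
    using sum_power_shift[of y "\<lambda>p. Epoly k (m - int p)" k] window[of m] m
    by (simp add: algebra_simps)
  moreover have "[:1, 1:] = 1 + y" by (simp add: y_def monom_Suc one_pCons)
  moreover have "y ^ k = y * y ^ (k - 1)" using k by (simp flip: power_Suc)
  ultimately show ?thesis by (simp add: algebra_simps y_power)
qed

lemma coeff_Epoly_eq_0:
  assumes k: "k \<ge> 2"
  shows "k * i < (k - 1) * M \<Longrightarrow> coeff (Epoly k (int M)) i = 0"
proof (induction M arbitrary: i rule: less_induct)
  case (less M)
  have summand: "coeff (monom 1 p * Epoly k (int M - int t)) i = 0"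
    if "t \<in> {1..k}" "p = (if t = k then k - 1 else t)" for t p
  proof (cases "t \<le> M \<and> p \<le> i")
    case True
    have "k * (i - p) = k * i - k * p" "(k - 1) * (M - t) = (k - 1) * M - (k - 1) * t"
      by (simp_all add: diff_mult_distrib2)
    moreover have "(k - 1) * t \<le> k * p" using that by (cases "t = k") auto
    moreover have "k * p \<le> k * i" "(k - 1) * t \<le> (k - 1) * M" using True by simp_all
    ultimately have "k * (i - p) < (k - 1) * (M - t)" using less.prems by linarith
    then show ?thesis using less.IH[of "M - t" "i - p"] True that by (simp add: coeff_monom_mult of_nat_diff)
  qed (auto simp: coeff_monom_mult Epoly_neg)
  have "M > 0" using less.prems by (cases M) auto
  moreover have "coeff (monom 1 (k - 1) * Epoly k (int M - int k)) i = 0" using summand[of k] k by simp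
  moreover have "coeff (monom 1 p * Epoly k (int M - int p)) i = 0" if "p \<in> {1..k - 1}" for p
    using summand[of p p] that by auto
  ultimately show ?case using k by (simp add: Epoly_pos coeff_sum)
qed

lemma degree_Epoly:
  assumes k: "k \<ge> 2"
  shows "degree (Epoly k (int M)) \<le> M"
proof (induction M rule: less_induct)
  case (less M)
  have summand: "degree (monom 1 p * Epoly k (int M - int t)) \<le> M" if "t \<in> {1..k}" "p \<le> t" for p t
  proof (cases "t \<le> M")
    case True
    have "degree (monom (1::int) p * Epoly k (int (M - t))) \<le> p + (M - t)"
      using less.IH[of "M - t"] True that
      by (intro order.trans[OF degree_mult_le] add_mono) (auto simp: degree_monom_eq)
    then show ?thesis using True that by (simp add: of_nat_diff)
  qed (simp add: Epoly_neg)
  show ?case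
  proof (cases "M = 0")
    case False
    have "degree (\<Sum>p = 1..k - 1. monom 1 p * Epoly k (int M - int p)) \<le> M"
      by (rule degree_sum_le) (use summand in auto)
    then show ?thesis
      using False k summand[of k "k - 1"] by (simp add: Epoly_pos degree_diff_le)
  qed (use k in simp)
qed

lemma sum_alternating_choose_Suc:
  "(\<Sum>p = 1..R. (-1::int) ^ (R - p) * int (Suc D choose (R - p))) =
    (-1) ^ R * int (D choose R) - (-1) ^ R * int (Suc D choose R)"
proof -
  have "(\<Sum>i\<le>R. (-1::int) ^ i * int (Suc D choose i)) = (-1) ^ R * int (D choose R)"
    by (induction R) (simp_all add: algebra_simps)
  moreover have "(\<Sum>p = 1..R. (-1::int) ^ (R - p) * int (Suc D choose (R - p))) = (\<Sum>i<R. (-1) ^ i * int (Suc D choose i))"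
    using sum.atLeastLessThan_rev_at_least_Suc_atMost[of "\<lambda>i. (-1::int) ^ i * int (Suc D choose i)" 0 R]
    by (simp add: atLeast0LessThan)
  ultimately show ?thesis by (simp add: lessThan_Suc_atMost[symmetric])
qed

lemma coeff_monom_mult_Epoly_eq_0:
  assumes k: "k \<ge> 2" and "M = k * D + R" "R < p"
  shows "coeff (monom 1 p * Epoly k (int M - int p)) ((k - 1) * D + R) = 0"
proof (cases "p \<le> M \<and> p \<le> (k - 1) * D + R")
  case True
  obtain c where c: "k = Suc c" using k by (cases k) auto
  obtain a b where ab: "(k - 1) * D + R = p + a" "M = p + b" using True by (metis le_add_diff_inverse)
  have "b = a + D" "a < c * D" using ab assms unfolding c by simp_all
  then have "k * a < (k - 1) * b" unfolding c by (simp add: algebra_simps)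
  then show ?thesis using coeff_Epoly_eq_0[OF k] ab by (simp add: coeff_monom_mult_add)
next
  case False
  then consider "M < p" | "(k - 1) * D + R < p" by linarith
  then show ?thesis by cases (simp_all add: coeff_monom_mult Epoly_neg)
qed

lemma coeff_Epoly_lowest:
  assumes k: "k \<ge> 2"
  shows "M = k * D + R \<Longrightarrow> R < k \<Longrightarrow> coeff (Epoly k (int M)) ((k - 1) * D + R) = (-1) ^ R * int (Suc D choose R)"
proof (induction M arbitrary: D R rule: less_induct)
  case (less M)
  define l where "l = (k - 1) * D + R"
  have first: "coeff (monom 1 (k - 1) * Epoly k (int M - int k)) l = (-1) ^ R * int (D choose R)"
    if "M \<noteq> 0"
  proof (cases D)
    case 0
    then show ?thesis using less.prems k that by (cases R) (simp_all add: Epoly_neg)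
  next
    case (Suc D')
    have "int M - int k = int (k * D' + R)" using less.prems unfolding Suc by simp
    moreover have "l = (k - 1) + ((k - 1) * D' + R)" unfolding Suc l_def by simp
    ultimately show ?thesis
      using less.IH[of "k * D' + R" D' R] less.prems Suc by (simp only: coeff_monom_mult_add)
  qed
  have summand: "coeff (monom 1 p * Epoly k (int M - int p)) l =
      (if p \<le> R then (-1) ^ (R - p) * int (Suc D choose (R - p)) else 0)" if p: "p \<in> {1..k - 1}" for p
  proof (cases "p \<le> R")
    case True
    have "int M - int p = int (k * D + (R - p))" "l = p + ((k - 1) * D + (R - p))"
      using less.prems True unfolding l_def by simp_all
    then show ?thesis using less.IH[of "k * D + (R - p)" D "R - p"] less.prems True p by (simp add: coeff_monom_mult)
  qed (use coeff_monom_mult_Epoly_eq_0[OF k less.prems(1)] in \<open>simp add: l_def\<close>)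
  have sums: "(\<Sum>p = 1..k - 1. coeff (monom 1 p * Epoly k (int M - int p)) l) =
      (\<Sum>p = 1..R. (-1) ^ (R - p) * int (Suc D choose (R - p)))"
    using summand less.prems by (intro sum.mono_neutral_cong_right) auto
  show ?case
  proof (cases "M = 0")
    case False
    have "coeff (Epoly k (int M)) l = coeff (monom 1 (k - 1) * Epoly k (int M - int k)) l -
        (\<Sum>p = 1..k - 1. coeff (monom 1 p * Epoly k (int M - int p)) l)"
      using False k by (simp add: Epoly_pos coeff_sum)
    then have "coeff (Epoly k (int M)) l = (-1) ^ R * int (Suc D choose R)"
      unfolding first[OF False] sums sum_alternating_choose_Suc by simp
    then show ?thesis unfolding l_def .
  qed (use less.prems k in simp)
qed

definition E_order :: "nat \<Rightarrow> int \<Rightarrow> nat" where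
  "E_order k j = (if j < 2 then 0 else nat (int k + 1 - j))"

definition E_lead :: "nat \<Rightarrow> int \<Rightarrow> int \<Rightarrow> int" where
  "E_lead k q j = (if j < 2 then (-1) ^ ((k - 1) * nat q)
     else (-1) ^ ((k - 1) * nat (q + 1)) * int (nat (q + 1) choose nat (int k + 1 - j)))"

lemma E_lead_rec:
  assumes k: "k \<ge> 2" and q: "q \<ge> 0" "j \<le> 1 \<Longrightarrow> q \<ge> 1" and j: "0 \<le> j" "j \<le> int k"
  shows "E_lead k q j =
    (-1) ^ (k - 1) * (if j < 2 then 0 else (-1) ^ ((k - 1) * nat q) * int (nat q choose nat (int k - j)))
    - (-1) ^ k * E_lead k (q - 1) j"
proof -
  obtain c where c: "k = Suc c" using k by (cases k) auto
  show ?thesis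
  proof (cases "j < 2")
    case True
    then have "nat q = Suc (nat (q - 1))" using q by simp
    then show ?thesis using True by (simp add: E_lead_def c power_add)
  next
    case False
    then have "nat (q + 1) = Suc (nat q)" "nat (q - 1 + 1) = nat q" "nat (int k + 1 - j) = Suc (nat (int k - j))"
      using q j by simp_all
    then show ?thesis using False by (simp add: E_lead_def c power_add algebra_simps)
  qed
qed

lemma Epoly_lead_at_minus_one_initial:
  assumes k: "k \<ge> 2" and M: "1 - int k \<le> M" "M \<le> 1" "M = q * (int k + 1) + j" "0 \<le> j" "j \<le> int k"
  shows "lead_at_minus_one (E_order k j) (E_lead k q j) (Epoly k M)"
proof -
  consider "M < 0" | "M = 0" | "M = 1" using M by linarith
  then show ?thesis
  proof cases
    case 1
    have "M = (int k + 1) * (-1) + (M + int k + 1)" by simp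
    from int_div_pos_eq[OF this] have "q = -1"
      using int_div_pos_eq[of M "int k + 1" q j] M 1 by (simp add: mult.commute)
    then have "E_lead k q j = 0" using M 1 by (simp add: E_lead_def)
    then show ?thesis using 1 by (simp add: Epoly_neg lead_at_minus_one_zero)
  next
    case 2
    then have "q = 0" "j = 0" using int_div_pos_eq[of M "int k + 1" q j] M by (simp_all add: mult.commute)
    then show ?thesis using 2 k lead_at_minus_one_poly[of 1] by (simp add: E_lead_def E_order_def)
  next
    case 3
    then have "q = 0" "j = 1" using int_div_pos_eq[of M "int k + 1" q j] M k by (simp_all add: mult.commute)
    then show ?thesis using 3 k lead_at_minus_one_poly[of "- monom 1 1"]
      by (simp add: E_lead_def E_order_def Epoly_1 poly_monom)
  qed
qed

lemma linear_mult_Epoly_lead_at_minus_one: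
  assumes k: "k \<ge> 2" and M: "M = q * (int k + 1) + j" "0 \<le> j" "j \<le> int k" "q \<ge> 0" "j \<le> 1 \<Longrightarrow> q \<ge> 1"
    and IH: "\<And>q' j'. M - int k = q' * (int k + 1) + j' \<Longrightarrow> 0 \<le> j' \<Longrightarrow> j' \<le> int k \<Longrightarrow>
      lead_at_minus_one (E_order k j') (E_lead k q' j') (Epoly k (M - int k))"
  shows "lead_at_minus_one (E_order k j)
    (if j < 2 then 0 else (-1) ^ ((k - 1) * nat q) * int (nat q choose nat (int k - j)))
    ([:1, 1:] * Epoly k (M - int k))"
proof -
  consider "j = 0" | "j = 1" | "j \<ge> 2" "j = int k" | "j \<ge> 2" "j < int k" using M by linarith
  then show ?thesis
  proof cases
    case 1
    then have "lead_at_minus_one 0 (E_lead k (q - 1) 1) (Epoly k (M - int k))"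
      using IH[of "q - 1" 1] M k by (simp add: algebra_simps E_order_def)
    then show ?thesis using 1 lead_at_minus_one_mult[OF lead_at_minus_one_linear]
      by (auto simp: E_order_def intro: lead_at_minus_one_less)
  next
    case 2
    then have "lead_at_minus_one (k - 1) (E_lead k (q - 1) 2) (Epoly k (M - int k))"
      using IH[of "q - 1" 2] M k by (simp add: algebra_simps E_order_def nat_diff_distrib)
    then show ?thesis using 2 k lead_at_minus_one_mult[OF lead_at_minus_one_linear]
      by (auto simp: E_order_def intro: lead_at_minus_one_less)
  next
    case 3
    then have "lead_at_minus_one 0 ((-1) ^ ((k - 1) * nat q)) (Epoly k (M - int k))"
      using IH[of q 0] M by (simp add: algebra_simps E_order_def E_lead_def)
    then show ?thesis using 3 lead_at_minus_one_mult[OF lead_at_minus_one_linear] by (force simp: E_order_def)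
  next
    case 4
    then have "lead_at_minus_one (nat (int k - j)) ((-1) ^ ((k - 1) * nat q) * int (nat q choose nat (int k - j)))
        (Epoly k (M - int k))"
      using IH[of "q - 1" "j + 1"] M by (simp add: algebra_simps E_order_def E_lead_def)
    moreover have "1 + nat (int k - j) = E_order k j" using 4 by (simp add: E_order_def)
    ultimately show ?thesis using 4 lead_at_minus_one_mult[OF lead_at_minus_one_linear] by fastforce
  qed
qed

lemma Epoly_lead_at_minus_one:
  assumes k: "k \<ge> 2"
  shows "1 - int k \<le> M \<Longrightarrow> M = q * (int k + 1) + j \<Longrightarrow> 0 \<le> j \<Longrightarrow> j \<le> int k \<Longrightarrow>
    lead_at_minus_one (E_order k j) (E_lead k q j) (Epoly k M)"
proof (induction "nat (M + int k)" arbitrary: M q j rule: less_induct)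
  case less
  note M = less.prems
  have IH: "lead_at_minus_one (E_order k j') (E_lead k q' j') (Epoly k M')"
    if "M' < M" "1 - int k \<le> M'" "M' = q' * (int k + 1) + j'" "0 \<le> j'" "j' \<le> int k" for M' q' j'
    using less.hyps[of M' q' j'] that by simp
  show ?case
  proof (cases "M \<le> 1")
    case True
    then show ?thesis using Epoly_lead_at_minus_one_initial[OF k] M by blast
  next
    case False
    then have M2: "M \<ge> 2" by simp
    have q: "q \<ge> 0" "j \<le> 1 \<Longrightarrow> q \<ge> 1" using quotient_bounds[OF M2 M(2,3)] M(4) by simp_all
    have "lead_at_minus_one (E_order k j)
        (if j < 2 then 0 else (-1) ^ ((k - 1) * nat q) * int (nat q choose nat (int k - j)))
        ([:1, 1:] * Epoly k (M - int k))"
      by (rule linear_mult_Epoly_lead_at_minus_one[OF k M(2-4) q]) (use IH M2 k in auto)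
    from lead_at_minus_one_mult[OF lead_at_minus_one_monom[of "k - 1"] this]
    have left: "lead_at_minus_one (E_order k j)
        ((-1) ^ (k - 1) * (if j < 2 then 0 else (-1) ^ ((k - 1) * nat q) * int (nat q choose nat (int k - j))))
        (monom 1 (k - 1) * [:1, 1:] * Epoly k (M - int k))"
      by (simp only: mult.assoc add_0)
    have right: "lead_at_minus_one (E_order k j) ((-1) ^ k * E_lead k (q - 1) j) (monom 1 k * Epoly k (M - 1 - int k))"
      using lead_at_minus_one_mult[OF lead_at_minus_one_monom IH[of "M - 1 - int k" "q - 1" j]] M q M2
      by (simp add: algebra_simps)
    show ?thesis
      using lead_at_minus_one_diff[OF left right] E_lead_rec[OF k q M(3,4)] by (simp add: Epoly_rec[OF k M2])
  qed
qed

lemma rho_neg: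
  assumes k: "k \<ge> 2"
  shows "rho k (- (int M + int k - 1)) = E_order k (int M mod (int k + 1))"
proof -
  define q j where "q = int M div (int k + 1)" and "j = int M mod (int k + 1)"
  have j: "0 \<le> j" "j < int k + 1" and M: "int M = (int k + 1) * q + j"
    unfolding q_def j_def using pos_mod_bound[of "int k + 1"] by simp_all
  show ?thesis
  proof (cases "j = 0")
    case True
    have "- (int M + int k - 1) - 2 = (int k + 1) * (- q - 1)" using M True by (simp add: algebra_simps)
    then show ?thesis using True by (simp add: rho_def E_order_def j_def)
  next
    case False
    have "- (int M + int k - 1) - 2 = (int k + 1) * (- q - 2) + (int k + 1 - j)" using M by (simp add: algebra_simps)
    then have "(- (int M + int k - 1) - 2) mod (int k + 1) = int k + 1 - j"
      by (rule int_mod_pos_eq) (use j False in auto)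
    moreover have "(int k + 1 - j) mod int k = (if j = 1 then 0 else int k + 1 - j)" using j False by auto
    ultimately show ?thesis using j False unfolding rho_def E_order_def j_def[symmetric] by auto
  qed
qed

lemma rr_neg: "k \<ge> 2 \<Longrightarrow> rr k (- (int M + int k - 1)) = M mod k"
  by (simp add: rr_def nat_mod_as_int)

text \<open>Here the cofactor value \<open>E_lead\<close> vanishes, so the multiplicities of the roots \<open>-1\<close> and \<open>0\<close>
  of a nonzero \<open>Epoly k M\<close> would add up to more than its degree.\<close>

lemma Epoly_eq_0:
  assumes k: "k \<ge> 2" and M: "int M = q * (int k + 1) + j" "q \<ge> 0" "j \<ge> 2" "q + j < int k"
  shows "Epoly k (int M) = 0"
proof (rule ccontr)
  assume E: "Epoly k (int M) \<noteq> 0"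
  have "E_lead k q j = 0" using M by (simp add: E_lead_def)
  then have "lead_at_minus_one (E_order k j) 0 (Epoly k (int M))"
    using Epoly_lead_at_minus_one[OF k _ M(1)] M k by simp
  then have "E_order k j < order (-1) (Epoly k (int M))"
    using E by (rule lead_at_minus_one_zero_order)
  moreover have "\<forall>i < M - nat q. coeff (Epoly k (int M)) i = 0"
  proof (intro allI impI coeff_Epoly_eq_0[OF k])
    fix i assume "i < M - nat q"
    then have "int k * int i \<le> int k * (int M - q - 1)" by (intro mult_left_mono) auto
    then have "int k * int i < (int k - 1) * int M" using M unfolding M(1) by (simp add: algebra_simps)
    then have "int (k * i) < int ((k - 1) * M)" using k by (simp add: of_nat_diff)
    then show "k * i < (k - 1) * M" by (simp only: of_nat_less_iff)
  qed
  then have "M - nat q \<le> order 0 (Epoly k (int M))"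
    using E by (simp add: monom_1_dvd_iff' flip: monom_1_dvd_iff)
  ultimately have "E_order k j + 1 + (M - nat q) \<le> M"
    using order_add_order_le_degree[OF E, of "-1" 0] degree_Epoly[OF k, of M] by linarith
  then show False using M by (simp add: E_order_def)
qed

lemma E_lead_nonzero:
  assumes k: "k \<ge> 2" and E: "Epoly k (int M) \<noteq> 0"
  shows "E_lead k (int M div (int k + 1)) (int M mod (int k + 1)) \<noteq> 0"
proof -
  define q j where "q = int M div (int k + 1)" and "j = int M mod (int k + 1)"
  have M: "int M = q * (int k + 1) + j" "q \<ge> 0" "j \<le> int k"
    unfolding q_def j_def using pos_mod_bound[of "int k + 1"]
    by (simp_all add: pos_imp_zdiv_nonneg_iff div_mult_mod_eq)
  have "\<not> (j \<ge> 2 \<and> q + j < int k)" using Epoly_eq_0[OF k M(1,2)] E by auto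
  then show ?thesis unfolding q_def[symmetric] j_def[symmetric] using M by (auto simp: E_lead_def)
qed

lemma coeff_Epoly_lowest_nonzero:
  assumes k: "k \<ge> 2" and E: "Epoly k (int M) \<noteq> 0"
  shows "coeff (Epoly k (int M)) ((k - 1) * (M div k) + M mod k) \<noteq> 0"
proof -
  define D R where "D = M div k" and "R = M mod k"
  have "R \<le> Suc D"
  proof (rule ccontr)
    assume "\<not> R \<le> Suc D"
    moreover have "int M = int (k * D + R)" "R < k" using k unfolding D_def R_def by simp_all
    then have "int M = int k * int D + int R" "R < k" by simp_all
    then have "int M = int D * (int k + 1) + int (R - D)" "R < k"
      using \<open>\<not> R \<le> Suc D\<close> by (simp_all add: algebra_simps of_nat_diff)
    ultimately show False using Epoly_eq_0[OF k] E by force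
  qed
  then show ?thesis using coeff_Epoly_lowest[OF k, of M D R] k by (simp add: D_def R_def)
qed

lemma Fpoly_neg_xk_factorization:
  assumes k: "k \<ge> 2" and F: "Fpoly k (- (int M + int k - 1)) \<noteq> 0"
  shows "xk_factorization k (rr k (- (int M + int k - 1))) (rho k (- (int M + int k - 1)))
    (Fpoly k (- (int M + int k - 1)))"
proof -
  define m where "m = (k - 1) * (M div k) + M mod k"
  obtain c where c: "k = Suc c" using k by (cases k) auto
  have "(k - 1) * M = (k - 1) * (k * (M div k) + M mod k)" by simp
  then have km: "k * m = (k - 1) * M + M mod k" unfolding m_def c by (simp add: algebra_simps)
  have E: "Epoly k (int M) \<noteq> 0" using Fpoly_neg_eq_Epoly[OF k, of M] F by auto
  have "lead_at_minus_one (E_order k (int M mod (int k + 1))) (E_lead k (int M div (int k + 1)) (int M mod (int k + 1)))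
      (Epoly k (int M))"
    by (rule Epoly_lead_at_minus_one[OF k _ div_mult_mod_eq[symmetric]])
      (use k pos_mod_bound[of "int k + 1" "int M"] in simp_all)
  moreover have "\<forall>i<m. coeff (Epoly k (int M)) i = 0"
  proof (intro allI impI coeff_Epoly_eq_0[OF k])
    fix i assume "i < m"
    then have "k * i + k \<le> k * m" by (metis add.commute mult_Suc_right mult_le_mono2 Suc_leI)
    then show "k * i < (k - 1) * M" using km k mod_less_divisor[of k M] by linarith
  qed
  ultimately have "xk_factorization k (M mod k) (E_order k (int M mod (int k + 1))) (Fpoly k (- (int M + int k - 1)))"
    using xk_factorizationI[OF Fpoly_neg_eq_Epoly[OF k] km] coeff_Epoly_lowest_nonzero[OF k E]
      E_lead_nonzero[OF k E] unfolding m_def by blast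
  then show ?thesis using rho_neg[OF k] rr_neg[OF k] by simp
qed

theorem mainTheorem13:
  fixes k :: nat and n :: int
  assumes "k \<ge> 2" and "Fpoly k n \<noteq> 0"
  shows "(\<exists>Q :: int poly.
            Fpoly k n = monom 1 (rr k n) * (monom 1 k + 1) ^ rho k n * pcompose Q (monom 1 k)
            \<and> \<not> [:1, 1:] dvd Q \<and> poly Q 0 \<noteq> 0)
         \<and> (odd k \<longrightarrow> order (-1) (Fpoly k n) = rho k n)"
proof -
  have "xk_factorization k (rr k n) (rho k n) (Fpoly k n)"
  proof -
    consider "n \<ge> 1" | "n \<le> 1 - int k" | "2 - int k \<le> n \<and> n \<le> 0" by linarith
    then show ?thesis
    proof cases
      case 1
      then have "n = int (nat (n - 1)) + 1" by simp
      then show ?thesis using Fpoly_pos_xk_factorization[OF assms(1), of "nat (n - 1)"] by simp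
    next
      case 2
      then have "n = - (int (nat (1 - n - int k)) + int k - 1)" by simp
      then show ?thesis using Fpoly_neg_xk_factorization[OF assms(1), of "nat (1 - n - int k)"] assms(2) by metis
    next
      case 3
      then show ?thesis using Fpoly_zero[OF assms(1)] assms(2) by simp
    qed
  qed
  then show ?thesis using xk_factorization_order_minus_one unfolding xk_factorization_def by blast
qed

end
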